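(* Let $\sigma\in\mathfrak S_k$ and $\tau\in\mathfrak S_{l}$ be consecutive patterns ($k,l\ge1$) with $A_\sigma(z)=A_\tau(z)$. Then $A_{12\text{-}\sigma}(z)=A_{12\text{-}\tau}(z)$, where for a consecutive pattern $\sigma=\sigma_1\cdots\sigma_k$, $12\text{-}\sigma$ denotes the generalized pattern $12\text{-}(\sigma_1+2)(\sigma_2+2)\cdots(\sigma_k+2)$.
   Context: $\mathfrak S_n$ is the symmetric group on $\{1,\dots,n\}$, permutations in one-line notation. A generalized pattern of length $m$ is a permutation $\sigma_1\cdots\sigma_m\in\mathfrak S_m$ with, between each pair of adjacent entries, either a dash "-" or nothing. A permutation $\pi\in\mathfrak S_n$ contains it if there are indices $i_1<\dots<i_m$ with $i_{j+1}=i_j+1$ whenever there is no dash between $\sigma_j$ and $\sigma_{j+1}$, and with $\pi_{i_a}<\pi_{i_b}$ iff $\sigma_a<\sigma_b$ for all $a,b$; otherwise $\pi$ avoids it. A consecutive pattern has no dashes. $\alpha_n(\sigma)$ is the number of permutations in $\mathfrak S_n$ avoiding $\sigma$ ($\alpha_0=1$) and $A_\sigma(z)=\sum_{n\ge0}\alpha_n(\sigma)z^n/n!$. *)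

theory Defs
  imports "HOL-Computational_Algebra.Formal_Power_Series"
begin

definition perms :: "nat \<Rightarrow> nat list set" where
  "perms n = {p. distinct p \<and> set p = {1..n}}"

text \<open>A generalized pattern is a pair (sigma, D): sigma is a permutation in one-line
notation (a list), and a 0-based position j is in D iff there is a dash between
sigma!j and sigma!(j+1).\<close>
type_synonym gpattern = "nat list \<times> nat set"

definition contains :: "nat list \<Rightarrow> gpattern \<Rightarrow> bool" where
  "contains \<pi> P = (let \<sigma> = fst P; D = snd P; m = length \<sigma> in
     \<exists>ix :: nat \<Rightarrow> nat.
       (\<forall>j<m. ix j < length \<pi>) \<and>
       (\<forall>j. j + 1 < m \<longrightarrow> ix j < ix (j + 1)) \<and>
       (\<forall>j. j + 1 < m \<and> j \<notin> D \<longrightarrow> ix (j + 1) = ix j + 1) \<and>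
       (\<forall>a<m. \<forall>b<m. (\<pi> ! (ix a) < \<pi> ! (ix b)) \<longleftrightarrow> (\<sigma> ! a < \<sigma> ! b)))"

definition avoids :: "nat list \<Rightarrow> gpattern \<Rightarrow> bool" where
  "avoids \<pi> P = (\<not> contains \<pi> P)"

definition alpha :: "nat \<Rightarrow> gpattern \<Rightarrow> nat" where
  "alpha n P = card {\<pi> \<in> perms n. avoids \<pi> P}"

definition egf :: "gpattern \<Rightarrow> real fps" where
  "egf P = Abs_fps (\<lambda>n. of_nat (alpha n P) / fact n)"

definition consec :: "nat list \<Rightarrow> gpattern" where
  "consec \<sigma> = (\<sigma>, {})"

text \<open>12-sigma: the generalized pattern 12-(sigma_1+2)...(sigma_k+2), dash only
between the entry 2 (position 1) and sigma_1+2 (position 2).\<close>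
definition twelve_dash :: "nat list \<Rightarrow> gpattern" where
  "twelve_dash \<sigma> = ([1, 2] @ map (\<lambda>x. x + 2) \<sigma>, {1})"

end

theory Submission
  imports Defs "HOL-Combinatorics.Multiset_Permutations" "HOL-Library.Infinite_Set"
begin

(* Call a position j of \<pi> above an ascent if some ascent top \<pi>(q-1) < \<pi>(q) with q < j has
   \<pi>(q) < \<pi>(j).  Then \<pi> contains 12-\<sigma> iff some consecutive occurrence of \<sigma> lies entirely on
   such positions, and the positions above an ascent split into maximal runs of consecutive
   positions.  Permuting the entries inside one run does not change which positions are above an
   ascent: every entry of the run exceeds the top of a common ascent to the left of the run.
   Since \<sigma> and \<tau> are c-Wilf-equivalent, on every finite set S there is a bijection between the
   arrangements of S avoiding \<sigma> and those avoiding \<tau>.  Applying it to the runs one at a time,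
   from left to right, injects the 12-\<sigma>-avoiders into the 12-\<tau>-avoiders; by symmetry the two
   numbers agree. *)

section \<open>Consecutive occurrences\<close>

definition occurs_at :: "nat list \<Rightarrow> nat \<Rightarrow> nat list \<Rightarrow> bool" where
  "occurs_at \<pi> p \<rho> \<longleftrightarrow> p + length \<rho> \<le> length \<pi> \<and>
     (\<forall>a<length \<rho>. \<forall>b<length \<rho>. \<pi>!(p+a) < \<pi>!(p+b) \<longleftrightarrow> \<rho>!a < \<rho>!b)"

lemma contains_consec_iff:
  assumes "\<rho> \<noteq> []"
  shows "contains \<pi> (consec \<rho>) \<longleftrightarrow> (\<exists>p. occurs_at \<pi> p \<rho>)"
proof
  assume "contains \<pi> (consec \<rho>)"
  then obtain ix where bound: "\<forall>j<length \<rho>. ix j < length \<pi>"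
    and step: "\<forall>j. j + 1 < length \<rho> \<longrightarrow> ix (j + 1) = ix j + 1"
    and order: "\<forall>a<length \<rho>. \<forall>b<length \<rho>. \<pi>!ix a < \<pi>!ix b \<longleftrightarrow> \<rho>!a < \<rho>!b"
    unfolding contains_def consec_def Let_def by auto
  have ix: "ix j = ix 0 + j" if "j < length \<rho>" for j
    using that by (induction j) (use step in auto)
  have "ix 0 + length \<rho> \<le> length \<pi>"
    using bound[rule_format, of "length \<rho> - 1"] ix[of "length \<rho> - 1"] assms by simp
  with order ix show "\<exists>p. occurs_at \<pi> p \<rho>"
    unfolding occurs_at_def by (intro exI[of _ "ix 0"]) metis
next
  assume "\<exists>p. occurs_at \<pi> p \<rho>"
  then obtain p where "occurs_at \<pi> p \<rho>" ..
  then show "contains \<pi> (consec \<rho>)"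
    unfolding contains_def consec_def Let_def occurs_at_def
    by (intro exI[of _ "\<lambda>j. p + j"]) auto
qed

definition avoiders :: "nat list \<Rightarrow> nat set \<Rightarrow> nat list set" where
  "avoiders \<rho> S = {r \<in> permutations_of_set S. \<forall>p. \<not> occurs_at r p \<rho>}"

lemma occurs_at_map_strict_mono:
  assumes "strict_mono_on A h" and "set r \<subseteq> A"
  shows "occurs_at (map h r) p \<rho> \<longleftrightarrow> occurs_at r p \<rho>"
proof -
  have "map h r ! i < map h r ! j \<longleftrightarrow> r!i < r!j" if "i < length r" "j < length r" for i j
    using that assms strict_mono_on_less[OF assms(1)] by (simp add: subset_iff)
  then show ?thesis unfolding occurs_at_def by auto
qed

lemma avoiders_image:
  assumes "strict_mono_on A h"
  shows "avoiders \<rho> (h ` A) = map h ` avoiders \<rho> A"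
proof -
  have "occurs_at (map h r) p \<rho> \<longleftrightarrow> occurs_at r p \<rho>" if "r \<in> permutations_of_set A" for r p
    using occurs_at_map_strict_mono[OF assms] permutations_of_setD(1)[OF that] by simp
  then show ?thesis
    unfolding avoiders_def permutations_of_set_image_inj[OF strict_mono_on_imp_inj_on[OF assms]]
    by auto
qed

lemma card_avoiders_image:
  assumes "strict_mono_on A h"
  shows "card (avoiders \<rho> (h ` A)) = card (avoiders \<rho> A)"
proof -
  have "inj_on (map h) (avoiders \<rho> A)"
    using permutations_of_set_lists unfolding avoiders_def
    by (blast intro: inj_on_subset[OF inj_on_map_lists[OF strict_mono_on_imp_inj_on[OF assms]]])
  then show ?thesis by (simp add: avoiders_image[OF assms] card_image)
qed

lemma card_avoiders:
  assumes "finite S"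
  shows "card (avoiders \<rho> S) = card (avoiders \<rho> {1..card S})"
proof -
  obtain h where "bij_betw h {..<card S} S" and "strict_mono_on {..<card S} h"
    using ex_bij_betw_strict_mono_card[OF assms] .
  then have "card (avoiders \<rho> S) = card (avoiders \<rho> {..<card S})"
    using card_avoiders_image bij_betw_imp_surj_on by metis
  also have "\<dots> = card (avoiders \<rho> (Suc ` {..<card S}))"
    by (rule card_avoiders_image[symmetric]) (simp add: strict_mono_on_def)
  also have "Suc ` {..<card S} = {1..card S}"
    by (simp add: atLeast1_atMost_eq_remove0 image_Suc_lessThan)
  finally show ?thesis .
qed

lemma perms_eq_permutations_of_set: "perms n = permutations_of_set {1..n}"
  unfolding perms_def permutations_of_set_def by blast

lemma alpha_consec: "\<rho> \<noteq> [] \<Longrightarrow> alpha n (consec \<rho>) = card (avoiders \<rho> {1..n})"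
  unfolding alpha_def avoids_def avoiders_def perms_eq_permutations_of_set
  by (simp add: contains_consec_iff)

lemma egf_eq_iff: "egf P = egf Q \<longleftrightarrow> (\<forall>n. alpha n P = alpha n Q)"
  unfolding egf_def fps_eq_iff by simp

section \<open>Occurrences of 12-\<sigma>\<close>

definition ascent_top :: "nat list \<Rightarrow> nat \<Rightarrow> bool" where
  "ascent_top \<pi> q \<longleftrightarrow> 0 < q \<and> q < length \<pi> \<and> \<pi>!(q-1) < \<pi>!q"

definition above_ascent :: "nat list \<Rightarrow> nat \<Rightarrow> bool" where
  "above_ascent \<pi> j \<longleftrightarrow> j < length \<pi> \<and> (\<exists>q<j. ascent_top \<pi> q \<and> \<pi>!q < \<pi>!j)"

definition occurs_above_ascent :: "nat list \<Rightarrow> nat \<Rightarrow> nat list \<Rightarrow> bool" where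
  "occurs_above_ascent \<pi> p \<rho> \<longleftrightarrow>
     occurs_at \<pi> p \<rho> \<and> (\<forall>j\<in>{p..<p + length \<rho>}. above_ascent \<pi> j)"

lemma above_ascent_bounds: "above_ascent \<pi> j \<Longrightarrow> 0 < j \<and> j < length \<pi>"
  unfolding above_ascent_def by auto

lemma ascent_top_below_window:
  assumes "p < e" and "\<forall>j\<in>{p..<e}. above_ascent \<pi> j"
  obtains q where "q < p" "ascent_top \<pi> q" "\<forall>j\<in>{p..<e}. \<pi>!q < \<pi>!j"
proof -
  define j0 where "j0 = arg_min_on (\<lambda>j. \<pi>!j) {p..<e}"
  have j0: "j0 \<in> {p..<e}" and least: "\<forall>j\<in>{p..<e}. \<pi>!j0 \<le> \<pi>!j"
    using arg_min_if_finite[of "{p..<e}" "\<lambda>j. \<pi>!j"] assms(1) unfolding j0_def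
    by (auto simp: not_less)
  then obtain q where q: "q < j0" "ascent_top \<pi> q" "\<pi>!q < \<pi>!j0"
    using assms(2) unfolding above_ascent_def by blast
  moreover have "q < p"
    using q j0 least by (meson atLeastLessThan_iff less_trans not_le not_less)
  ultimately show thesis
    using that least by (meson order_less_le_trans)
qed

lemma nth_twelve_dash_pattern:
  "fst (twelve_dash \<rho>) ! 0 = 1"
  "fst (twelve_dash \<rho>) ! Suc 0 = 2"
  "i < length \<rho> \<Longrightarrow> fst (twelve_dash \<rho>) ! Suc (Suc i) = \<rho>!i + 2"
  by (simp_all add: twelve_dash_def nth_append)

lemma occurs_above_ascent_if_contains_twelve_dash:
  assumes "\<rho> \<noteq> []" and "0 \<notin> set \<rho>" and "contains \<pi> (twelve_dash \<rho>)"
  shows "\<exists>p. occurs_above_ascent \<pi> p \<rho>"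
proof -
  let ?P = "fst (twelve_dash \<rho>)" and ?k = "length \<rho>"
  obtain ix where bound: "\<forall>j<?k+2. ix j < length \<pi>"
    and incr: "\<forall>j. j + 1 < ?k+2 \<longrightarrow> ix j < ix (j + 1)"
    and step: "\<forall>j. j + 1 < ?k+2 \<and> j \<noteq> 1 \<longrightarrow> ix (j + 1) = ix j + 1"
    and order: "\<forall>a<?k+2. \<forall>b<?k+2. \<pi>!ix a < \<pi>!ix b \<longleftrightarrow> ?P!a < ?P!b"
    using assms(3) unfolding contains_def twelve_dash_def Let_def by auto
  have ix: "ix (j + 2) = ix 2 + j" if "j < ?k" for j
    using that by (induction j) (use step in \<open>auto simp: numeral_2_eq_2\<close>)
  define p q where "p = ix 2" and "q = ix 1"
  have "ascent_top \<pi> q"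
    using order[rule_format, of 0 1] bound step[rule_format, of 0] assms(1)
    unfolding ascent_top_def q_def by (auto simp: nth_twelve_dash_pattern)
  have "q < p"
    using incr[rule_format, of 1] assms(1) unfolding p_def q_def by (simp add: numeral_2_eq_2)
  have len: "p + ?k \<le> length \<pi>"
    using bound[rule_format, of "?k + 1"] ix[of "?k - 1"] assms(1) unfolding p_def
    by (simp add: Suc_diff_Suc)
  have "occurs_at \<pi> p \<rho>"
    unfolding occurs_at_def
  proof (intro conjI len allI impI)
    fix a b assume "a < ?k" "b < ?k"
    then show "\<pi>!(p+a) < \<pi>!(p+b) \<longleftrightarrow> \<rho>!a < \<rho>!b"
      using order[rule_format, of "a+2" "b+2"] ix[of a] ix[of b]
      unfolding p_def by (simp add: nth_twelve_dash_pattern)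
  qed
  moreover have "above_ascent \<pi> j" if j: "j \<in> {p..<p + ?k}" for j
  proof -
    have "0 < \<rho>!(j-p)"
      using j assms(2) by (metis atLeastLessThan_iff gr0I less_diff_conv2 add.commute nth_mem)
    then have "\<pi>!q < \<pi>!j"
      using order[rule_format, of 1 "j - p + 2"] ix[of "j-p"] j
      unfolding p_def q_def by (auto simp: nth_twelve_dash_pattern)
    then show ?thesis
      unfolding above_ascent_def using j len \<open>q < p\<close> \<open>ascent_top \<pi> q\<close>
      by (intro conjI exI[of _ q]) auto
  qed
  ultimately show ?thesis unfolding occurs_above_ascent_def by blast
qed

lemma contains_twelve_dash_if_occurs_above_ascent:
  assumes "\<rho> \<noteq> []" and "0 \<notin> set \<rho>" and "occurs_above_ascent \<pi> p \<rho>"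
  shows "contains \<pi> (twelve_dash \<rho>)"
proof -
  let ?P = "fst (twelve_dash \<rho>)" and ?k = "length \<rho>"
  have len: "p + ?k \<le> length \<pi>"
    and order: "\<And>a b. a < ?k \<Longrightarrow> b < ?k \<Longrightarrow> \<pi>!(p+a) < \<pi>!(p+b) \<longleftrightarrow> \<rho>!a < \<rho>!b"
    and window: "\<forall>j\<in>{p..<p + ?k}. above_ascent \<pi> j"
    using assms(3) unfolding occurs_above_ascent_def occurs_at_def by auto
  obtain q where "q < p" and q: "ascent_top \<pi> q" and below: "\<forall>j\<in>{p..<p + ?k}. \<pi>!q < \<pi>!j"
    using ascent_top_below_window[OF _ window] assms(1) by auto
  define ix where "ix j = (if j = 0 then q - 1 else if j = 1 then q else p + (j - 2))" for j
  have ix: "ix 0 = q - 1" "ix (Suc 0) = q" "ix (Suc (Suc i)) = p + i" for i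
    unfolding ix_def by auto
  have ascent: "\<pi>!(q-1) < \<pi>!q"
    using q unfolding ascent_top_def by simp
  have low: "\<pi>!q < \<pi>!(p+i)" "\<pi>!(q-1) < \<pi>!(p+i)" if "i < ?k" for i
    using ascent below that by (auto intro: less_trans)
  have high: "0 < \<rho>!i" if "i < ?k" for i
    using assms(2) that by (metis gr0I nth_mem)
  have index_cases: "a = 0 \<or> a = Suc 0 \<or> (\<exists>i<?k. a = Suc (Suc i))" if "a < ?k + 2" for a
    using that by (cases "a < 2") (auto intro!: exI[of _ "a - 2"])
  have "\<pi>!ix a < \<pi>!ix b \<longleftrightarrow> ?P!a < ?P!b" if "a < ?k + 2" "b < ?k + 2" for a b
    using index_cases[OF that(1)] index_cases[OF that(2)] ascent
    by (auto simp: ix nth_twelve_dash_pattern order dest: low high)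
  moreover have "ix a < ix (a + 1)" if "a + 1 < ?k + 2" for a
    using that \<open>q < p\<close> q unfolding ix_def ascent_top_def by auto
  moreover have "ix (a + 1) = ix a + 1" if "a + 1 < ?k + 2" "a \<noteq> 1" for a
    using that q unfolding ix_def ascent_top_def by auto
  moreover have "ix a < length \<pi>" if "a < ?k + 2" for a
    using that \<open>q < p\<close> len unfolding ix_def by auto
  ultimately show ?thesis
    unfolding contains_def Let_def by (intro exI[of _ ix]) (simp add: twelve_dash_def)
qed

lemma contains_twelve_dash_iff:
  assumes "\<rho> \<noteq> []" and "0 \<notin> set \<rho>"
  shows "contains \<pi> (twelve_dash \<rho>) \<longleftrightarrow> (\<exists>p. occurs_above_ascent \<pi> p \<rho>)"
  using assms occurs_above_ascent_if_contains_twelve_dash contains_twelve_dash_if_occurs_above_ascent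
  by blast

lemma alpha_twelve_dash:
  "\<rho> \<noteq> [] \<Longrightarrow> 0 \<notin> set \<rho> \<Longrightarrow>
     alpha n (twelve_dash \<rho>) = card {\<pi> \<in> perms n. \<forall>p. \<not> occurs_above_ascent \<pi> p \<rho>}"
  unfolding alpha_def avoids_def by (simp add: contains_twelve_dash_iff)

section \<open>Rearranging a block of positions above an ascent\<close>

lemma above_ascent_transfer:
  assumes len: "length \<psi> = length \<pi>"
    and outside: "\<And>j. j < length \<pi> \<Longrightarrow> j < c \<or> e \<le> j \<Longrightarrow> \<psi>!j = \<pi>!j"
    and window_values: "(\<lambda>j. \<psi>!j) ` {c..<e} \<subseteq> (\<lambda>j. \<pi>!j) ` {c..<e}"
    and run: "c < e" "\<forall>j\<in>{c..<e}. above_ascent \<pi> j"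
    and "above_ascent \<pi> j"
  shows "above_ascent \<psi> j"
proof -
  obtain q0 where "q0 < c" and q0: "ascent_top \<pi> q0" and below: "\<forall>i\<in>{c..<e}. \<pi>!q0 < \<pi>!i"
    using ascent_top_below_window[OF run] by blast
  have same_top: "ascent_top \<psi> q = ascent_top \<pi> q" if "q < c \<or> e < q" for q
  proof -
    have "\<psi>!q = \<pi>!q \<and> \<psi>!(q-1) = \<pi>!(q-1)" if "q < length \<pi>"
    proof -
      have "q < c \<or> e \<le> q" "q - 1 < length \<pi>" "q - 1 < c \<or> e \<le> q - 1"
        using that \<open>q < c \<or> e < q\<close> by auto
      then show ?thesis using outside that by blast
    qed
    then show ?thesis using len unfolding ascent_top_def by auto
  qed
  have "\<pi>!q0 < \<psi>!i" if "i \<in> {c..<e}" for i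
  proof -
    have "\<psi>!i \<in> (\<lambda>j. \<pi>!j) ` {c..<e}"
      using window_values that by blast
    then show ?thesis using below by auto
  qed
  then have via_q0: "above_ascent \<psi> j" if "c \<le> j" "j < length \<pi>" "c \<le> j \<and> j < e \<or> \<pi>!q0 < \<psi>!j" for j
    using that \<open>q0 < c\<close> q0 same_top[of q0] outside[of q0] len unfolding above_ascent_def
    by (intro conjI exI[of _ q0]) (auto simp: ascent_top_def)
  obtain q where "j < length \<pi>" "q < j" and q: "ascent_top \<pi> q" "\<pi>!q < \<pi>!j"
    using \<open>above_ascent \<pi> j\<close> unfolding above_ascent_def by blast
  consider "j < c" | "c \<le> j" "j < e" | "e \<le> j" "q < c \<or> e < q" | "e \<le> j" "c \<le> q" "q \<le> e"
    by linarith
  then show ?thesis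
  proof cases
    case 1
    then show ?thesis
      using \<open>q < j\<close> \<open>j < length \<pi>\<close> q same_top[of q] outside[of q] outside[of j] len
      unfolding above_ascent_def by (intro conjI exI[of _ q]) auto
  next
    case 2
    then show ?thesis using via_q0 \<open>j < length \<pi>\<close> by simp
  next
    case 3
    then show ?thesis
      using \<open>q < j\<close> \<open>j < length \<pi>\<close> q same_top[of q] outside[of q] outside[of j] len
      unfolding above_ascent_def by (intro conjI exI[of _ q]) auto
  next
    case 4
    have "\<pi>!q0 < \<pi>!q"
    proof (cases "q = e")
      case True
      then have "\<pi>!(e-1) < \<pi>!q" using q unfolding ascent_top_def by simp
      moreover have "\<pi>!q0 < \<pi>!(e-1)" using below run(1) by simp
      ultimately show ?thesis by simp
    next
      case False
      then show ?thesis using below 4 by simp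
    qed
    then show ?thesis using via_q0 4 q run(1) outside[of j] \<open>j < length \<pi>\<close> by simp
  qed
qed

lemma above_ascent_rearrange:
  assumes len: "length \<psi> = length \<pi>"
    and outside: "\<And>j. j < length \<pi> \<Longrightarrow> j < c \<or> e \<le> j \<Longrightarrow> \<psi>!j = \<pi>!j"
    and window_values: "(\<lambda>j. \<psi>!j) ` {c..<e} = (\<lambda>j. \<pi>!j) ` {c..<e}"
    and run: "c < e" "\<forall>j\<in>{c..<e}. above_ascent \<pi> j"
  shows "above_ascent \<psi> = above_ascent \<pi>"
proof -
  have "(\<lambda>j. \<psi>!j) ` {c..<e} \<subseteq> (\<lambda>j. \<pi>!j) ` {c..<e}"
    using window_values by simp
  note forward = above_ascent_transfer[OF len outside this run]
  have "(\<lambda>j. \<pi>!j) ` {c..<e} \<subseteq> (\<lambda>j. \<psi>!j) ` {c..<e}"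
    using window_values by simp
  moreover have "\<forall>j\<in>{c..<e}. above_ascent \<psi> j"
    using forward run(2) by blast
  ultimately have backward: "above_ascent \<psi> j \<Longrightarrow> above_ascent \<pi> j" for j
    using above_ascent_transfer[of \<pi> \<psi> c e] len outside run(1) by simp
  show ?thesis using forward backward by blast
qed

definition segment :: "nat list \<Rightarrow> nat \<Rightarrow> nat \<Rightarrow> nat list" where
  "segment \<pi> c e = take (e - c) (drop c \<pi>)"

definition replace_segment :: "nat list \<Rightarrow> nat \<Rightarrow> nat \<Rightarrow> nat list \<Rightarrow> nat list" where
  "replace_segment \<pi> c e r = take c \<pi> @ r @ drop e \<pi>"

lemma length_segment: "e \<le> length \<pi> \<Longrightarrow> length (segment \<pi> c e) = e - c"
  by (simp add: segment_def)

lemma nth_segment: "e \<le> length \<pi> \<Longrightarrow> i < e - c \<Longrightarrow> segment \<pi> c e ! i = \<pi>!(c + i)"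
  by (simp add: segment_def)

lemma segment_eq_map: "e \<le> length \<pi> \<Longrightarrow> segment \<pi> c e = map (\<lambda>j. \<pi>!j) [c..<e]"
  by (rule nth_equalityI) (simp_all add: length_segment nth_segment)

lemma set_segment: "e \<le> length \<pi> \<Longrightarrow> set (segment \<pi> c e) = (\<lambda>j. \<pi>!j) ` {c..<e}"
  by (simp add: segment_eq_map)

lemma replace_segment_segment: "c \<le> e \<Longrightarrow> replace_segment \<pi> c e (segment \<pi> c e) = \<pi>"
  unfolding replace_segment_def segment_def
  by (metis append_take_drop_id drop_drop le_add_diff_inverse2)

context
  fixes \<pi> r :: "nat list" and c e :: nat
  assumes ce: "c \<le> e" "e \<le> length \<pi>" and len_r: "length r = e - c"
begin

lemma length_replace_segment: "length (replace_segment \<pi> c e r) = length \<pi>"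
  using ce len_r by (simp add: replace_segment_def)

lemma nth_replace_segment:
  "j < length \<pi> \<Longrightarrow> replace_segment \<pi> c e r ! j = (if j < c \<or> e \<le> j then \<pi>!j else r!(j - c))"
  using ce len_r by (auto simp: replace_segment_def nth_append min_def)

lemma segment_replace_segment: "segment (replace_segment \<pi> c e r) c e = r"
  using ce len_r by (simp add: replace_segment_def segment_def)

end

lemma replace_segment_eqD:
  assumes eq: "replace_segment \<pi>1 c e r1 = replace_segment \<pi>2 c e r2"
    and "c \<le> e" "e \<le> length \<pi>1" "e \<le> length \<pi>2" "length r1 = e - c" "length r2 = e - c"
  shows "r1 = r2" and "segment \<pi>1 c e = segment \<pi>2 c e \<Longrightarrow> \<pi>1 = \<pi>2"
proof -
  show "r1 = r2"
    using arg_cong[OF eq, of "\<lambda>\<pi>. segment \<pi> c e"] assms(2-6) by (simp add: segment_replace_segment)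
  have "take c \<pi>1 = take c \<pi>2" "drop e \<pi>1 = drop e \<pi>2"
    using arg_cong[OF eq, of "take c"] arg_cong[OF eq, of "drop e"] assms(2-6)
    by (simp_all add: replace_segment_def)
  show "\<pi>1 = \<pi>2" if "segment \<pi>1 c e = segment \<pi>2 c e"
  proof -
    have "\<pi>1 = replace_segment \<pi>1 c e (segment \<pi>1 c e)"
      by (rule replace_segment_segment[OF assms(2), symmetric])
    also have "\<dots> = replace_segment \<pi>2 c e (segment \<pi>2 c e)"
      using that \<open>take c \<pi>1 = take c \<pi>2\<close> \<open>drop e \<pi>1 = drop e \<pi>2\<close>
      unfolding replace_segment_def by simp
    also have "\<dots> = \<pi>2"
      by (rule replace_segment_segment[OF assms(2)])
    finally show ?thesis .
  qed
qed

lemma replace_segment_in_permutations_of_set: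
  assumes "\<pi> \<in> permutations_of_set A" and "c \<le> e"
    and "r \<in> permutations_of_set (set (segment \<pi> c e))"
  shows "replace_segment \<pi> c e r \<in> permutations_of_set A"
proof -
  have "distinct (take c \<pi> @ segment \<pi> c e @ drop e \<pi>)"
    "set (take c \<pi> @ segment \<pi> c e @ drop e \<pi>) = A"
    using assms replace_segment_segment[of c e \<pi>]
    unfolding permutations_of_set_def replace_segment_def by auto
  then show ?thesis
    using assms(3) unfolding permutations_of_set_def replace_segment_def by auto
qed

lemma occurs_at_segment:
  assumes "c \<le> e" "e \<le> length \<pi>"
  shows "occurs_at (segment \<pi> c e) p \<rho> \<longleftrightarrow> c + p + length \<rho> \<le> e \<and> occurs_at \<pi> (c + p) \<rho>"
  using assms unfolding occurs_at_def
  by (auto simp: length_segment nth_segment add.assoc)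

lemma above_ascent_replace_segment:
  assumes "c < e" "e \<le> length \<pi>" "length r = e - c" "set r = set (segment \<pi> c e)"
    and "\<forall>j\<in>{c..<e}. above_ascent \<pi> j"
  shows "above_ascent (replace_segment \<pi> c e r) = above_ascent \<pi>"
proof (rule above_ascent_rearrange[OF length_replace_segment _ _ assms(1,5)])
  let ?\<psi> = "replace_segment \<pi> c e r"
  have "e \<le> length ?\<psi>" using assms length_replace_segment by simp
  then show "(\<lambda>j. ?\<psi>!j) ` {c..<e} = (\<lambda>j. \<pi>!j) ` {c..<e}"
    using assms set_segment[of e \<pi> c] set_segment[of e ?\<psi> c] segment_replace_segment by simp
qed (use assms nth_replace_segment in auto)

section \<open>Runs of positions above an ascent\<close>

definition run_start :: "nat list \<Rightarrow> nat \<Rightarrow> bool" where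
  "run_start \<pi> c \<longleftrightarrow> above_ascent \<pi> c \<and> \<not> above_ascent \<pi> (c - 1)"

definition run_end :: "nat list \<Rightarrow> nat \<Rightarrow> nat" where
  "run_end \<pi> c = (LEAST e. c < e \<and> \<not> above_ascent \<pi> e)"

lemma run_end:
  assumes "above_ascent \<pi> c"
  shows "c < run_end \<pi> c" "run_end \<pi> c \<le> length \<pi>" "\<not> above_ascent \<pi> (run_end \<pi> c)"
    "\<forall>j\<in>{c..<run_end \<pi> c}. above_ascent \<pi> j"
proof -
  have ex: "c < length \<pi> \<and> \<not> above_ascent \<pi> (length \<pi>)"
    using assms above_ascent_bounds by blast
  show "c < run_end \<pi> c" "\<not> above_ascent \<pi> (run_end \<pi> c)"
    unfolding run_end_def using LeastI[of "\<lambda>e. c < e \<and> \<not> above_ascent \<pi> e", OF ex] by auto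
  show "run_end \<pi> c \<le> length \<pi>"
    unfolding run_end_def using ex by (intro Least_le) auto
  show "\<forall>j\<in>{c..<run_end \<pi> c}. above_ascent \<pi> j"
    using not_less_Least[of _ "\<lambda>e. c < e \<and> \<not> above_ascent \<pi> e"] assms
    unfolding run_end_def by (metis atLeastLessThan_iff le_neq_implies_less)
qed

lemma run_start_run_end:
  assumes "run_start \<pi> c"
  shows "c < run_end \<pi> c" "run_end \<pi> c \<le> length \<pi>" "\<forall>j\<in>{c..<run_end \<pi> c}. above_ascent \<pi> j"
    "\<not> above_ascent \<pi> (run_end \<pi> c)" "\<not> above_ascent \<pi> (c - 1)"
  using assms run_end unfolding run_start_def by auto

lemma window_in_run_or_disjoint:
  assumes "run_start \<pi> c" and "0 < k" and "\<forall>j\<in>{p..<p + k}. above_ascent \<pi> j"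
  shows "p + k \<le> c \<or> run_end \<pi> c \<le> p \<or> (c \<le> p \<and> p + k \<le> run_end \<pi> c)"
proof -
  note run = run_start_run_end[OF assms(1)]
  have "0 < c"
    using assms(1) above_ascent_bounds unfolding run_start_def by blast
  moreover have "c - 1 \<notin> {p..<p + k}" "run_end \<pi> c \<notin> {p..<p + k}"
    using assms(3) run(4,5) by blast+
  ultimately show ?thesis using run(1) by auto
qed

definition in_run_before :: "nat \<Rightarrow> nat list \<Rightarrow> nat \<Rightarrow> bool" where
  "in_run_before c \<pi> p \<longleftrightarrow> (\<exists>a<c. a \<le> p \<and> (\<forall>j\<in>{a..p}. above_ascent \<pi> j))"

lemma in_run_before_Suc:
  "in_run_before (Suc c) \<pi> p \<longleftrightarrow>
     in_run_before c \<pi> p \<or> (run_start \<pi> c \<and> c \<le> p \<and> (\<forall>j\<in>{c..p}. above_ascent \<pi> j))"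
    (is "?lhs \<longleftrightarrow> in_run_before c \<pi> p \<or> ?new")
proof
  assume ?lhs
  then obtain a where a: "a < Suc c" "a \<le> p" and run: "\<forall>j\<in>{a..p}. above_ascent \<pi> j"
    unfolding in_run_before_def by blast
  consider "a < c" | "a = c" "run_start \<pi> c" | "a = c" "\<not> run_start \<pi> c"
    using a(1) by linarith
  then show "in_run_before c \<pi> p \<or> ?new"
  proof cases
    case 1
    then show ?thesis using a run unfolding in_run_before_def by blast
  next
    case 2
    then show ?thesis using a run by blast
  next
    case 3
    then have "above_ascent \<pi> (c - 1)" "0 < c"
      using a run above_ascent_bounds[of \<pi> c] unfolding run_start_def by auto
    have "above_ascent \<pi> j" if "j \<in> {c - 1..p}" for j
    proof (cases "j = c - 1")
      case False
      then show ?thesis using that run \<open>a = c\<close> by auto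
    qed (use \<open>above_ascent \<pi> (c - 1)\<close> in simp)
    then show ?thesis
      unfolding in_run_before_def using a \<open>a = c\<close> \<open>0 < c\<close>
      by (intro disjI1 exI[of _ "c - 1"]) auto
  qed
next
  show ?lhs if "in_run_before c \<pi> p \<or> ?new"
  proof (cases "in_run_before c \<pi> p")
    case True
    then show ?thesis unfolding in_run_before_def using less_SucI by blast
  next
    case False
    then have ?new using that by blast
    then show ?thesis unfolding in_run_before_def by blast
  qed
qed

lemma in_run_before_length:
  assumes "occurs_above_ascent \<pi> p \<rho>" and "\<rho> \<noteq> []"
  shows "in_run_before (length \<pi>) \<pi> p"
proof -
  have "above_ascent \<pi> p"
    using assms unfolding occurs_above_ascent_def by simp
  then show ?thesis
    unfolding in_run_before_def using above_ascent_bounds by (intro exI[of _ p]) auto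
qed

lemma occurs_above_ascent_replace_segment_outside:
  assumes "run_start \<pi> c" and e: "e = run_end \<pi> c" and len_r: "length r = e - c"
    and same: "above_ascent (replace_segment \<pi> c e r) = above_ascent \<pi>"
    and "p < c \<or> e \<le> p" and "\<rho> \<noteq> []"
  shows "occurs_above_ascent (replace_segment \<pi> c e r) p \<rho> \<longleftrightarrow> occurs_above_ascent \<pi> p \<rho>"
proof (cases "\<forall>j\<in>{p..<p + length \<rho>}. above_ascent \<pi> j")
  case True
  have run: "c < e" "e \<le> length \<pi>"
    using run_start_run_end[OF assms(1)] e by auto
  have "0 < length \<rho>" using assms(6) by simp
  with window_in_run_or_disjoint[OF assms(1) _ True] assms(5)
  have disjoint: "p + length \<rho> \<le> c \<or> e \<le> p"
    unfolding e by linarith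
  have agree: "replace_segment \<pi> c e r ! (p + a) = \<pi>!(p + a)" if "a < length \<rho>" for a
  proof -
    have "p + a < length \<pi>"
      using True that above_ascent_bounds by simp
    moreover have "p + a < c \<or> e \<le> p + a"
      using disjoint that by linarith
    ultimately show ?thesis
      using run len_r by (simp add: nth_replace_segment)
  qed
  have "occurs_at (replace_segment \<pi> c e r) p \<rho> \<longleftrightarrow> occurs_at \<pi> p \<rho>"
    unfolding occurs_at_def using run len_r agree by (simp add: length_replace_segment)
  then show ?thesis
    unfolding occurs_above_ascent_def same by simp
next
  case False
  then have "\<not> occurs_above_ascent (replace_segment \<pi> c e r) p \<rho>" "\<not> occurs_above_ascent \<pi> p \<rho>"
    unfolding occurs_above_ascent_def same by auto
  then show ?thesis by simp
qed

section \<open>Swapping the runs one at a time\<close>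

locale run_swap =
  fixes \<sigma> \<tau> :: "nat list" and swap :: "nat set \<Rightarrow> nat list \<Rightarrow> nat list"
  assumes \<sigma>_nonempty: "\<sigma> \<noteq> []" and \<tau>_nonempty: "\<tau> \<noteq> []"
    and bij_swap: "finite S \<Longrightarrow> bij_betw (swap S) (avoiders \<sigma> S) (avoiders \<tau> S)"
begin

(* Runs starting before c have been swapped already and must avoid \<tau> inside, the others \<sigma>:
   c = 0 gives the 12-\<sigma>-avoiders, c = n the 12-\<tau>-avoiders. *)
definition mixed_avoiders :: "nat \<Rightarrow> nat \<Rightarrow> nat list set" where
  "mixed_avoiders n c = {\<pi> \<in> perms n.
     \<forall>p. \<not> occurs_above_ascent \<pi> p (if in_run_before c \<pi> p then \<tau> else \<sigma>)}"

definition swap_run :: "nat \<Rightarrow> nat list \<Rightarrow> nat list" where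
  "swap_run c \<pi> = (if run_start \<pi> c then
     (let e = run_end \<pi> c; s = segment \<pi> c e in replace_segment \<pi> c e (swap (set s) s))
   else \<pi>)"

lemma segment_in_avoiders:
  assumes "\<pi> \<in> mixed_avoiders n c" and "run_start \<pi> c"
  defines "s \<equiv> segment \<pi> c (run_end \<pi> c)"
  shows "s \<in> avoiders \<sigma> (set s)"
proof -
  note run = run_start_run_end[OF assms(2)]
  have "distinct s"
    using assms(1) unfolding s_def segment_def mixed_avoiders_def perms_def by auto
  moreover have "\<not> occurs_at s p \<sigma>" for p
  proof
    assume "occurs_at s p \<sigma>"
    then have "occurs_above_ascent \<pi> (c + p) \<sigma>"
      using occurs_at_segment[of c "run_end \<pi> c" \<pi> p \<sigma>] run(1-3)
      unfolding s_def occurs_above_ascent_def by auto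
    moreover have "\<not> in_run_before c \<pi> (c + p)"
    proof
      assume "in_run_before c \<pi> (c + p)"
      then obtain a where "a < c" and run_from_a: "\<forall>j\<in>{a..c + p}. above_ascent \<pi> j"
        unfolding in_run_before_def by blast
      then have "c - 1 \<in> {a..c + p}" by auto
      then show False using run(5) run_from_a by blast
    qed
    moreover have "\<not> occurs_above_ascent \<pi> (c + p) (if in_run_before c \<pi> (c + p) then \<tau> else \<sigma>)"
      using assms(1) unfolding mixed_avoiders_def by blast
    ultimately show False by simp
  qed
  ultimately show ?thesis unfolding avoiders_def permutations_of_set_def by auto
qed

lemma swap_run_at_run_start:
  assumes "\<pi> \<in> mixed_avoiders n c" and "run_start \<pi> c"
  defines "e \<equiv> run_end \<pi> c"
  defines "s \<equiv> segment \<pi> c e"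
  defines "r \<equiv> swap (set s) s"
  shows "swap_run c \<pi> = replace_segment \<pi> c e r" and "r \<in> avoiders \<tau> (set s)"
    and "length r = e - c" and "above_ascent (swap_run c \<pi>) = above_ascent \<pi>"
    and "swap_run c \<pi> \<in> perms n"
proof -
  note run = run_start_run_end[OF assms(2), folded e_def]
  show swapped: "swap_run c \<pi> = replace_segment \<pi> c e r"
    using assms(2) unfolding swap_run_def e_def s_def r_def by (simp add: Let_def)
  have s: "s \<in> avoiders \<sigma> (set s)"
    using segment_in_avoiders[OF assms(1,2)] unfolding s_def e_def .
  then show r: "r \<in> avoiders \<tau> (set s)"
    unfolding r_def using bij_swap bij_betwE by blast
  have "length r = card (set s)" "length s = card (set s)"
    using r s unfolding avoiders_def by (auto simp: length_finite_permutations_of_set)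
  then show len_r: "length r = e - c"
    using run(2) by (simp add: s_def length_segment)
  have set_r: "set r = set s"
    using r unfolding avoiders_def by (auto dest: permutations_of_setD)
  show "above_ascent (swap_run c \<pi>) = above_ascent \<pi>"
    using above_ascent_replace_segment[OF run(1,2) len_r] set_r run(3) swapped
    unfolding s_def by simp
  show "swap_run c \<pi> \<in> perms n"
    using replace_segment_in_permutations_of_set[of \<pi> "{1..n}" c e r] assms(1) r run(1) swapped
    unfolding mixed_avoiders_def perms_eq_permutations_of_set avoiders_def s_def by auto
qed

lemma above_ascent_swap_run:
  "\<pi> \<in> mixed_avoiders n c \<Longrightarrow> above_ascent (swap_run c \<pi>) = above_ascent \<pi>"
  using swap_run_at_run_start(4) unfolding swap_run_def by (cases "run_start \<pi> c") auto

lemma not_occurs_above_ascent_in_swapped_run: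
  assumes "\<pi> \<in> mixed_avoiders n c" and "run_start \<pi> c" and "c \<le> p" "p < run_end \<pi> c"
  shows "\<not> occurs_above_ascent (swap_run c \<pi>) p \<tau>"
proof
  define e \<psi> where "e = run_end \<pi> c" and "\<psi> = swap_run c \<pi>"
  note swapped = swap_run_at_run_start[OF assms(1,2), folded e_def \<psi>_def]
  note run = run_start_run_end[OF assms(2), folded e_def]
  assume occ: "occurs_above_ascent \<psi> p \<tau>"
  then have "p + length \<tau> \<le> e"
    using window_in_run_or_disjoint[OF assms(2), of "length \<tau>" p] assms(3,4) \<tau>_nonempty
    unfolding occurs_above_ascent_def swapped(4) e_def by auto
  then have "occurs_at (segment \<psi> c e) (p - c) \<tau>"
    using occ assms(3) run(2) swapped(1,3) occurs_at_segment[of c e \<psi> "p - c" \<tau>]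
    unfolding occurs_above_ascent_def by (simp add: length_replace_segment)
  then show False
    using swapped(1-3) run(1,2) segment_replace_segment unfolding avoiders_def by auto
qed

lemma swap_run_in_mixed_avoiders:
  assumes "\<pi> \<in> mixed_avoiders n c"
  shows "swap_run c \<pi> \<in> mixed_avoiders n (Suc c)"
proof (cases "run_start \<pi> c")
  case False
  then have "in_run_before (Suc c) \<pi> = in_run_before c \<pi>"
    using in_run_before_Suc by blast
  then show ?thesis using assms False unfolding mixed_avoiders_def swap_run_def by simp
next
  case True
  define e \<psi> where "e = run_end \<pi> c" and "\<psi> = swap_run c \<pi>"
  note swapped = swap_run_at_run_start[OF assms True, folded e_def \<psi>_def]
  note run = run_start_run_end[OF True, folded e_def]
  have same_runs: "in_run_before d \<psi> = in_run_before d \<pi>" for d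
    unfolding in_run_before_def swapped(4) ..
  have "\<not> occurs_above_ascent \<psi> p (if in_run_before (Suc c) \<psi> p then \<tau> else \<sigma>)" for p
  proof (cases "c \<le> p \<and> p < e")
    case inside: True
    then have "in_run_before (Suc c) \<psi> p"
      using in_run_before_Suc True run(3) same_runs by auto
    then show ?thesis
      using not_occurs_above_ascent_in_swapped_run[OF assms True] inside
      unfolding \<psi>_def e_def by simp
  next
    case False
    then have "e \<in> {c..p}" if "c \<le> p"
      using that run(1) by auto
    then have "\<not> (c \<le> p \<and> (\<forall>j\<in>{c..p}. above_ascent \<pi> j))"
      using run(4) by blast
    then have "in_run_before (Suc c) \<psi> p = in_run_before c \<pi> p"
      unfolding same_runs in_run_before_Suc by blast
    moreover have "occurs_above_ascent \<psi> p \<rho> = occurs_above_ascent \<pi> p \<rho>" if "\<rho> \<noteq> []" for \<rho>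
      using occurs_above_ascent_replace_segment_outside[OF True e_def swapped(3)] that False
        swapped(1,4) unfolding \<psi>_def by auto
    ultimately show ?thesis
      using assms \<sigma>_nonempty \<tau>_nonempty unfolding mixed_avoiders_def by auto
  qed
  then show ?thesis using swapped(5) unfolding mixed_avoiders_def \<psi>_def by simp
qed

lemma inj_on_swap_run: "inj_on (swap_run c) (mixed_avoiders n c)"
proof (rule inj_onI)
  fix \<pi>1 \<pi>2
  assume in1: "\<pi>1 \<in> mixed_avoiders n c" and in2: "\<pi>2 \<in> mixed_avoiders n c"
    and eq: "swap_run c \<pi>1 = swap_run c \<pi>2"
  have "above_ascent \<pi>1 = above_ascent \<pi>2"
    using above_ascent_swap_run[OF in1] above_ascent_swap_run[OF in2] eq by simp
  then have start: "run_start \<pi>1 c = run_start \<pi>2 c" and same_end: "run_end \<pi>1 c = run_end \<pi>2 c"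
    unfolding run_start_def run_end_def by simp_all
  show "\<pi>1 = \<pi>2"
  proof (cases "run_start \<pi>1 c")
    case False
    then show ?thesis using eq start unfolding swap_run_def by simp
  next
    case True
    define e s1 s2 where "e = run_end \<pi>1 c" and "s1 = segment \<pi>1 c e" and "s2 = segment \<pi>2 c e"
    note swapped1 = swap_run_at_run_start[OF in1 True, folded e_def, folded s1_def]
    note swapped2 = swap_run_at_run_start[OF in2 True[unfolded start], folded same_end e_def,
        folded s2_def]
    have "length \<pi>1 = n" "length \<pi>2 = n"
      using in1 in2 unfolding mixed_avoiders_def perms_eq_permutations_of_set
      by (auto simp: length_finite_permutations_of_set)
    moreover have "c < e" "e \<le> length \<pi>1"
      using run_start_run_end[OF True] unfolding e_def by auto
    ultimately have replaced: "c \<le> e" "e \<le> length \<pi>1" "e \<le> length \<pi>2" by auto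
    note swapped_eq = replace_segment_eqD[OF eq[unfolded swapped1(1) swapped2(1)] replaced
        swapped1(3) swapped2(3)]
    have same_set: "set s1 = set s2"
      using swapped_eq(1) swapped1(2) swapped2(2) unfolding avoiders_def permutations_of_set_def
      by auto
    have "s1 \<in> avoiders \<sigma> (set s1)" "s2 \<in> avoiders \<sigma> (set s2)"
      using segment_in_avoiders[OF in1 True] segment_in_avoiders[OF in2 True[unfolded start]]
      unfolding s1_def s2_def e_def same_end by simp_all
    then have "s1 \<in> avoiders \<sigma> (set s1)" "s2 \<in> avoiders \<sigma> (set s1)"
      unfolding same_set .
    moreover have "inj_on (swap (set s1)) (avoiders \<sigma> (set s1))"
      using bij_swap[of "set s1"] by (simp add: bij_betw_def)
    moreover have "swap (set s1) s1 = swap (set s1) s2"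
      using swapped_eq(1) unfolding same_set .
    ultimately have "s1 = s2"
      by (blast dest: inj_onD)
    then show ?thesis
      using swapped_eq(2) unfolding s1_def s2_def by blast
  qed
qed

lemma card_mixed_avoiders_mono:
  assumes "c \<le> d"
  shows "card (mixed_avoiders n c) \<le> card (mixed_avoiders n d)"
  using assms
proof (induction rule: dec_induct)
  case (step d)
  have "finite (mixed_avoiders n (Suc d))"
    unfolding mixed_avoiders_def perms_eq_permutations_of_set by simp
  moreover have "swap_run d ` mixed_avoiders n d \<subseteq> mixed_avoiders n (Suc d)"
    using swap_run_in_mixed_avoiders by blast
  ultimately have "card (mixed_avoiders n d) \<le> card (mixed_avoiders n (Suc d))"
    using card_inj_on_le[OF inj_on_swap_run] by blast
  then show ?case using step.IH by simp
qed simp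

lemma card_avoiders_above_ascent_le:
  "card {\<pi> \<in> perms n. \<forall>p. \<not> occurs_above_ascent \<pi> p \<sigma>}
     \<le> card {\<pi> \<in> perms n. \<forall>p. \<not> occurs_above_ascent \<pi> p \<tau>}"
proof -
  have "mixed_avoiders n 0 = {\<pi> \<in> perms n. \<forall>p. \<not> occurs_above_ascent \<pi> p \<sigma>}"
    unfolding mixed_avoiders_def in_run_before_def by simp
  moreover have "mixed_avoiders n n = {\<pi> \<in> perms n. \<forall>p. \<not> occurs_above_ascent \<pi> p \<tau>}"
  proof -
    have "occurs_above_ascent \<pi> p (if in_run_before n \<pi> p then \<tau> else \<sigma>) \<longleftrightarrow>
        occurs_above_ascent \<pi> p \<tau>" if "\<pi> \<in> perms n" for \<pi> p
      using in_run_before_length[of \<pi> p] \<sigma>_nonempty \<tau>_nonempty that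
      unfolding perms_eq_permutations_of_set by (auto simp: length_finite_permutations_of_set)
    then show ?thesis unfolding mixed_avoiders_def by blast
  qed
  ultimately show ?thesis
    using card_mixed_avoiders_mono[of 0 n n] by simp
qed

end

theorem mainTheorem7:
  fixes \<sigma> \<tau> :: "nat list" and k l :: nat
  assumes "k \<ge> 1" and "l \<ge> 1"
    and "\<sigma> \<in> perms k" and "length \<sigma> = k"
    and "\<tau> \<in> perms l" and "length \<tau> = l"
    and "egf (consec \<sigma>) = egf (consec \<tau>)"
  shows "egf (twelve_dash \<sigma>) = egf (twelve_dash \<tau>)"
proof -
  have nonempty: "\<sigma> \<noteq> []" "\<tau> \<noteq> []" and positive: "0 \<notin> set \<sigma>" "0 \<notin> set \<tau>"
    using assms(1-6) unfolding perms_def by auto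
  have "card (avoiders \<sigma> S) = card (avoiders \<tau> S)" if "finite S" for S
    using assms(7) card_avoiders[OF that] alpha_consec[OF nonempty(1)] alpha_consec[OF nonempty(2)]
    by (simp add: egf_eq_iff)
  then have "\<exists>f. bij_betw f (avoiders \<sigma> S) (avoiders \<tau> S)" if "finite S" for S
    using that by (intro finite_same_card_bij) (simp_all add: avoiders_def)
  then obtain swap where swap: "\<And>S. finite S \<Longrightarrow> bij_betw (swap S) (avoiders \<sigma> S) (avoiders \<tau> S)"
    by metis
  interpret forward: run_swap \<sigma> \<tau> swap
    using nonempty swap by unfold_locales
  interpret backward: run_swap \<tau> \<sigma> "\<lambda>S. inv_into (avoiders \<sigma> S) (swap S)"
    using nonempty swap bij_betw_inv_into by unfold_locales auto
  have "alpha n (twelve_dash \<sigma>) = alpha n (twelve_dash \<tau>)" for n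
    using forward.card_avoiders_above_ascent_le backward.card_avoiders_above_ascent_le
      alpha_twelve_dash nonempty positive by (simp add: le_antisym)
  then show ?thesis by (simp add: egf_eq_iff)
qed

end
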